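(* Let $X$ be a pure $k$-dimensional simplicial complex and $\Delta^{\mathrm{up}}_{k-1}=\Delta^{\mathrm{up}}_{k-1}(X)$. Assume there are reals $\lambda_{\min},\lambda_{\max}$ such that for every $F\in X_{k-2}$, every eigenvalue $\lambda$ of the normalized graph Laplacian $\Delta(\mathrm{lk}\,F)$ other than the smallest one $\lambda_1=0$ (i.e. $\lambda_2,\dots,\lambda_m$, with $m$ the number of vertices of $\mathrm{lk}\,F$) satisfies $\lambda_{\min}\le\lambda\le\lambda_{\max}$. Then for all $f\in C^{k-1}(X;\mathbb R)$ orthogonal to $B^{k-1}(X)$ with respect to $\langle\cdot,\cdot\rangle$, $$(1+k\lambda_{\min}-k)\langle f,f\rangle\le\langle\Delta^{\mathrm{up}}_{k-1}f,f\rangle\le(1+k\lambda_{\max}-k)\langle f,f\rangle.$$ Hence all nontrivial eigenvalues of $\Delta^{\mathrm{up}}_{k-1}$ lie in $[1+k\lambda_{\min}-k,\,1+k\lambda_{\max}-k]$.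
   Context: Complexes have linearly ordered vertex sets; $X_i$ is the set of $i$-faces; $[F:G]$ is the oriented incidence number ($(-1)^j$ if $F\setminus G=\{v_j\}$, $F=\{v_0<\dots<v_i\}$; $0$ if $G\not\subseteq F$). $\deg(F)$ is the number of $k$-faces containing $F$; pure means all maximal faces have dimension $k$. $B^{k-1}(X)=\operatorname{im}\delta_{k-2}\subseteq C^{k-1}(X;\mathbb R)=\mathbb R^{X_{k-1}}$ where $(\delta f)(H)=\sum_G[H:G]f(G)$. $\langle f,g\rangle=\sum_{F\in X_{k-1}}\deg(F)f(F)g(F)$. $A_{k-1}(X)$ has entry $[F:F\cap G][G:F\cap G]$ if $|F\cap G|=k-1$ and $F\cup G\in X_k$, else $0$; $\Delta^{\mathrm{up}}_{k-1}(X)=I-D_{k-1}^{-1}A_{k-1}(X)$, $D_{k-1}$ the diagonal degree matrix; nontrivial eigenvalues are those of its restriction to the $\langle\cdot,\cdot\rangle$-orthogonal complement of $B^{k-1}(X)$. The link $\mathrm{lk}\,F=\{G\in X: F\cup G\in X,\ F\cap G=\emptyset\}$; for $F\in X_{k-2}$ it is a graph (without isolated vertices when $X$ is pure). For a graph $G$ without isolated vertices, $\Delta(G)=I-D^{-1}A$ with $A$ the adjacency matrix and $D$ the diagonal degree matrix. *)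

theory Defs
  imports "Jordan_Normal_Form.Char_Poly"
begin

(* Faces are finite sets of vertices; an i-face has cardinality i+1.
   We index faces by CARDINALITY: faces X c = X_{c-1}. *)
definition simplicial_complex :: "'v set set \<Rightarrow> bool" where
  "simplicial_complex X \<longleftrightarrow> finite X \<and> (\<forall>F\<in>X. finite F) \<and> (\<forall>F\<in>X. \<forall>G. G \<subseteq> F \<longrightarrow> G \<in> X)"

definition faces :: "'v set set \<Rightarrow> nat \<Rightarrow> 'v set set" where
  "faces X c = {F\<in>X. card F = c}"

definition pure_dim :: "'v set set \<Rightarrow> nat \<Rightarrow> bool" where
  "pure_dim X k \<longleftrightarrow> (\<forall>F\<in>X. (\<forall>G\<in>X. F \<subseteq> G \<longrightarrow> G = F) \<longrightarrow> card F = k + 1)"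

definition incidence :: "'v::linorder set \<Rightarrow> 'v set \<Rightarrow> real" where
  "incidence F G = (if G \<subseteq> F \<and> card (F - G) = 1
      then (-1) ^ card {u\<in>F. u < the_elem (F - G)} else 0)"

definition deg :: "'v set set \<Rightarrow> nat \<Rightarrow> 'v set \<Rightarrow> nat" where
  "deg X k F = card {H \<in> faces X (k + 1). F \<subseteq> H}"

definition coboundary :: "'v::linorder set set \<Rightarrow> nat \<Rightarrow> ('v set \<Rightarrow> real) \<Rightarrow> 'v set \<Rightarrow> real" where
  "coboundary X c g H = (\<Sum>G\<in>faces X c. incidence H G * g G)"

definition inner_w :: "'v set set \<Rightarrow> nat \<Rightarrow> ('v set \<Rightarrow> real) \<Rightarrow> ('v set \<Rightarrow> real) \<Rightarrow> real" where
  "inner_w X k f g = (\<Sum>F\<in>faces X k. real (deg X k F) * f F * g F)"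

definition orth_B :: "'v::linorder set set \<Rightarrow> nat \<Rightarrow> ('v set \<Rightarrow> real) \<Rightarrow> bool" where
  "orth_B X k f \<longleftrightarrow> (\<forall>g. inner_w X k f (coboundary X (k - 1) g) = 0)"

definition adj_up :: "'v::linorder set set \<Rightarrow> nat \<Rightarrow> 'v set \<Rightarrow> 'v set \<Rightarrow> real" where
  "adj_up X k F G = (if card (F \<inter> G) = k - 1 \<and> F \<union> G \<in> faces X (k + 1)
      then incidence F (F \<inter> G) * incidence G (F \<inter> G) else 0)"

definition up_laplacian :: "'v::linorder set set \<Rightarrow> nat \<Rightarrow> ('v set \<Rightarrow> real) \<Rightarrow> 'v set \<Rightarrow> real" where
  "up_laplacian X k f F = f F - (1 / real (deg X k F)) * (\<Sum>G\<in>faces X k. adj_up X k F G * f G)"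

definition link :: "'v set set \<Rightarrow> 'v set \<Rightarrow> 'v set set" where
  "link X F = {G\<in>X. F \<union> G \<in> X \<and> F \<inter> G = {}}"

definition link_vertices :: "'v set set \<Rightarrow> 'v set \<Rightarrow> 'v set" where
  "link_vertices X F = {v. {v} \<in> link X F}"

definition link_adj :: "'v set set \<Rightarrow> 'v set \<Rightarrow> 'v \<Rightarrow> 'v \<Rightarrow> bool" where
  "link_adj X F u v \<longleftrightarrow> u \<noteq> v \<and> {u, v} \<in> link X F"

definition link_degree :: "'v set set \<Rightarrow> 'v set \<Rightarrow> 'v \<Rightarrow> nat" where
  "link_degree X F v = card {w \<in> link_vertices X F. link_adj X F v w}"

definition link_laplacian :: "'v::linorder set set \<Rightarrow> 'v set \<Rightarrow> real mat" where
  "link_laplacian X F =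
     (let vs = sorted_list_of_set (link_vertices X F); m = length vs in
      mat m m (\<lambda>(i, j). (if i = j then 1 else 0)
        - (if link_adj X F (vs ! i) (vs ! j) then 1 / real (link_degree X F (vs ! i)) else 0)))"

end

(*
  Garland's method.  For a (k-2)-face sigma, the localization
  f_sigma(v) = [sigma + v : sigma] * f(sigma + v) of a (k-1)-cochain f is a function on the vertices
  of the graph lk sigma.  If f is orthogonal to the coboundaries, each f_sigma is orthogonal to the
  constants in the degree-weighted inner product of lk sigma, so the spectral hypothesis bounds its
  Rayleigh quotient for the normalized Laplacian of lk sigma by lambda_min and lambda_max; for the
  non-symmetric matrix I - D^(-1) A this goes through its symmetric conjugate I - D^(-1/2) A D^(-1/2)
  and the real spectral theorem.  Summed over all sigma, the local weighted norms give k <f,f> and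
  the local adjacency forms give <f,f> - <Delta_up f, f>, which yields both bounds.
*)

theory Submission
  imports Defs "Jordan_Normal_Form.Schur_Decomposition"
begin

section \<open>Real symmetric matrices\<close>

lemma transpose_mat_sym_index:
  assumes "A \<in> carrier_mat n n" "transpose_mat A = A" "i < n" "j < n"
  shows "A $$ (i,j) = A $$ (j,i)"
proof -
  have "A $$ (i,j) = transpose_mat A $$ (j,i)" using assms(1,3,4) by simp
  then show ?thesis unfolding assms(2) .
qed

lemma real_symmetric_eigenvalue_real:
  fixes A :: "real mat"
  assumes A: "A \<in> carrier_mat n n" and sym: "transpose_mat A = A"
    and ev: "eigenvalue (map_mat complex_of_real A) a"
  shows "cnj a = a"
proof -
  define Ac where "Ac = map_mat complex_of_real A"
  have Ac: "Ac \<in> carrier_mat n n" using A by (simp add: Ac_def)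
  obtain v where v: "v \<in> carrier_vec n" "v \<noteq> 0\<^sub>v n" "Ac *\<^sub>v v = a \<cdot>\<^sub>v v"
    using ev Ac unfolding Ac_def[symmetric] eigenvalue_def eigenvector_def by auto
  define N where "N = (\<Sum>i<n. cnj (v$i) * v$i)"
  define s where "s = (\<Sum>i<n. cnj (v$i) * (Ac *\<^sub>v v)$i)"
  have s_eq: "s = a * N" unfolding s_def N_def v(3) using v(1)
    by (simp add: sum_distrib_left mult.commute mult.left_commute)
  have Av: "(Ac *\<^sub>v v)$i = (\<Sum>j<n. complex_of_real (A $$ (i,j)) * v$j)" if "i < n" for i
    using that A v(1) by (auto simp: Ac_def scalar_prod_def atLeast0LessThan)
  have s_expand: "s = (\<Sum>i<n. \<Sum>j<n. cnj (v$i) * complex_of_real (A $$ (i,j)) * v$j)"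
    unfolding s_def by (simp add: Av sum_distrib_left mult.assoc)
  have "cnj s = (\<Sum>i<n. \<Sum>j<n. v$i * complex_of_real (A $$ (i,j)) * cnj (v$j))"
    unfolding s_expand by (simp add: cnj_sum)
  also have "\<dots> = (\<Sum>j<n. \<Sum>i<n. v$i * complex_of_real (A $$ (i,j)) * cnj (v$j))"
    by (rule sum.swap)
  also have "\<dots> = s"
    unfolding s_expand
    by (intro sum.cong refl) (simp add: transpose_mat_sym_index[OF A sym] mult.commute mult.left_commute)
  finally have "cnj s = s" .
  have N_real: "N = complex_of_real (\<Sum>i<n. (cmod (v$i))^2)"
    unfolding N_def of_real_sum
    by (intro sum.cong refl) (simp only: complex_norm_square mult.commute[of "cnj _"])
  obtain i0 where "i0 < n" "v$i0 \<noteq> 0" using v(1,2) by (auto simp: vec_eq_iff)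
  then have "(\<Sum>i<n. (cmod (v$i))^2) > 0" by (intro sum_pos2[of _ i0]) auto
  then have "N \<noteq> 0" unfolding N_real of_real_eq_0_iff by simp
  moreover have "cnj a * N = a * N"
    using s_eq \<open>cnj s = s\<close> N_real by (metis complex_cnj_complex_of_real complex_cnj_mult)
  ultimately show "cnj a = a" by simp
qed

lemma real_symmetric_eigenvector:
  fixes A :: "real mat"
  assumes A: "A \<in> carrier_mat n n" and sym: "transpose_mat A = A" and n: "0 < n"
  obtains e v where "v \<in> carrier_vec n" "v \<noteq> 0\<^sub>v n" "A *\<^sub>v v = e \<cdot>\<^sub>v v"
proof -
  define Ac where "Ac = map_mat complex_of_real A"
  have Ac: "Ac \<in> carrier_mat n n" using A by (simp add: Ac_def)
  \<comment> \<open>a complex root of the characteristic polynomial, which is real by symmetry\<close>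
  obtain as where cp: "char_poly Ac = (\<Prod>a\<leftarrow>as. [:-a,1:])" and len: "length as = n"
    using char_poly_factorized[OF Ac] by blast
  obtain a where "a \<in> set as" using len n by (cases as) auto
  then have "eigenvalue Ac a"
    unfolding eigenvalue_root_char_poly[OF Ac] cp by (auto simp: poly_prod_list prod_list_zero_iff)
  then have "cnj a = a" using real_symmetric_eigenvalue_real[OF A sym] by (simp add: Ac_def)
  then have a: "a = complex_of_real (Re a)" by (metis Reals_cnj_iff complex_is_Real_iff of_real_Re)
  have "poly (char_poly Ac) (complex_of_real (Re a)) = 0"
    using \<open>eigenvalue Ac a\<close> eigenvalue_root_char_poly[OF Ac] a by simp
  also have "char_poly Ac = map_poly complex_of_real (char_poly A)"
    unfolding Ac_def by (rule of_real_hom.char_poly_hom[OF A])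
  finally have "poly (char_poly A) (Re a) = 0" by simp
  then have "eigenvalue A (Re a)" using eigenvalue_root_char_poly[OF A] by simp
  then show thesis using that A unfolding eigenvalue_def eigenvector_def by blast
qed

lemma real_scalar_prod_conj [simp]: "(v :: real vec) \<bullet>c w = v \<bullet> w"
  by (simp add: scalar_prod_def)

lemma orthogonal_basis_with_head:
  fixes v :: "real vec"
  assumes v: "v \<in> carrier_vec n" "v \<noteq> 0\<^sub>v n"
  obtains ws where "set ws \<subseteq> carrier_vec n" "length ws = n" "corthogonal ws" "ws ! 0 = v"
proof -
  interpret cof_vec_space n "TYPE(real)" .
  have n: "0 < n" using v by (cases n) auto
  define b where "b = basis_completion v"
  from basis_completion[OF v, folded b_def]
  have indep: "\<not> lin_dep (set b)" and b: "set b \<subseteq> carrier_vec n" "length b = n" "distinct b"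
    and hd_b: "hd b = v" by auto
  define ws where "ws = gram_schmidt n b"
  from gram_schmidt_result[OF b(1) b(3) indep ws_def]
  have ws: "set ws \<subseteq> carrier_vec n" "length ws = n" "corthogonal ws" by (auto simp: b(2))
  obtain b' where "b = v # b'" using hd_b b(2) n by (cases b) auto
  then have "hd ws = v" unfolding ws_def using gram_schmidt_hd[OF v(1)] by simp
  then have "ws ! 0 = v" using ws(2) n by (cases ws) auto
  then show thesis using that ws by blast
qed

lemma orthonormal_mat_of_cols:
  fixes ws :: "real vec list"
  assumes ws: "set ws \<subseteq> carrier_vec n" "length ws = n" and orth: "corthogonal ws"
  defines "W \<equiv> mat_of_cols n (map (\<lambda>w. (1 / sqrt (w \<bullet> w)) \<cdot>\<^sub>v w) ws)"
  shows "W \<in> carrier_mat n n" "transpose_mat W * W = 1\<^sub>m n"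
    "\<And>j. j < n \<Longrightarrow> col W j = (1 / sqrt (ws ! j \<bullet> ws ! j)) \<cdot>\<^sub>v ws ! j"
proof -
  have ws_i: "ws ! i \<in> carrier_vec n" if "i < n" for i using that ws by auto
  have ws_pos: "ws ! i \<bullet> ws ! i > 0" if "i < n" for i
  proof -
    have "ws ! i \<bullet> ws ! i \<noteq> 0" using corthogonalD[OF orth, of i i] that ws by simp
    moreover have "ws ! i \<bullet> ws ! i \<ge> 0"
      using ws_i[OF that] by (simp add: scalar_prod_def sum_nonneg)
    ultimately show ?thesis by simp
  qed
  show W: "W \<in> carrier_mat n n"
    using mat_of_cols_carrier(1)[of n "map (\<lambda>w. (1 / sqrt (w \<bullet> w)) \<cdot>\<^sub>v w) ws"] ws by (simp add: W_def)
  show col_W: "col W j = (1 / sqrt (ws ! j \<bullet> ws ! j)) \<cdot>\<^sub>v ws ! j" if "j < n" for j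
    using that ws ws_i by (simp add: W_def)
  have "col W i \<bullet> col W j = (if i = j then 1 else 0)" if "i < n" "j < n" for i j
  proof -
    have "col W i \<bullet> col W j = (1 / sqrt (ws!i \<bullet> ws!i)) * (1 / sqrt (ws!j \<bullet> ws!j)) * (ws ! i \<bullet> ws ! j)"
      using that ws_i[OF that(1)] ws_i[OF that(2)]
      by (simp add: col_W smult_scalar_prod_distrib scalar_prod_smult_distrib)
    moreover have "i \<noteq> j \<Longrightarrow> ws ! i \<bullet> ws ! j = 0"
      using corthogonalD[OF orth, of i j] that ws by simp
    ultimately show ?thesis using ws_pos[OF that(1)] by (auto simp: real_sqrt_mult[symmetric])
  qed
  then show "transpose_mat W * W = 1\<^sub>m n"
    by (intro eq_matI) (use W in auto)
qed

lemma orthogonal_mat_with_first_col: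
  fixes v :: "real vec"
  assumes v: "v \<in> carrier_vec n" and unit: "v \<bullet> v = 1"
  obtains W where "W \<in> carrier_mat n n" "transpose_mat W * W = 1\<^sub>m n" "col W 0 = v"
proof -
  have n: "0 < n" using unit v by (cases n) (auto simp: scalar_prod_def)
  have "v \<noteq> 0\<^sub>v n" using unit v by auto
  \<comment> \<open>Gram--Schmidt keeps the first vector, and normalizing does not change the unit vector \<open>v\<close>\<close>
  then obtain ws where ws: "set ws \<subseteq> carrier_vec n" "length ws = n" "corthogonal ws" "ws ! 0 = v"
    using orthogonal_basis_with_head[OF v] by blast
  from orthonormal_mat_of_cols[OF ws(1-3)] n show thesis
    using that unit ws(4) by fastforce
qed

lemma symmetric_deflation:
  fixes A W :: "real mat"
  assumes A: "A \<in> carrier_mat (Suc m) (Suc m)" "transpose_mat A = A"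
    and W: "W \<in> carrier_mat (Suc m) (Suc m)" "transpose_mat W * W = 1\<^sub>m (Suc m)"
    and ev: "A *\<^sub>v col W 0 = e \<cdot>\<^sub>v col W 0"
  obtains B where "B \<in> carrier_mat m m" "transpose_mat B = B"
    "transpose_mat W * A * W = four_block_mat (mat 1 1 (\<lambda>_. e)) (0\<^sub>m 1 m) (0\<^sub>m m 1) B"
proof -
  define n where "n = Suc m"
  define A' where "A' = transpose_mat W * A * W"
  have A': "A' \<in> carrier_mat n n" using A W by (simp add: A'_def n_def)
  have "transpose_mat A' = transpose_mat W * transpose_mat (transpose_mat W * A)"
    unfolding A'_def using A W by (subst transpose_mult[of _ n n]) (auto simp: n_def)
  also have "transpose_mat (transpose_mat W * A) = transpose_mat A * W"
    using A W by (subst transpose_mult[of _ n n]) (auto simp: n_def)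
  also have "transpose_mat W * (transpose_mat A * W) = A'"
    unfolding A'_def A(2) using A W by (simp add: n_def assoc_mult_mat[of _ n n _ n _ n])
  finally have A'_sym: "transpose_mat A' = A'" .
  have cols_orth: "col W i \<bullet> col W j = (if i = j then 1 else 0)" if "i < n" "j < n" for i j
  proof -
    have "col W i \<bullet> col W j = (transpose_mat W * W) $$ (i,j)" using that W(1) by (simp add: n_def)
    then show ?thesis unfolding W(2) using that by (simp add: n_def)
  qed
  have A'_col0: "A' $$ (i,0) = (if i = 0 then e else 0)" if "i < n" for i
  proof -
    have "A' $$ (i,0) = (transpose_mat W * (A * W)) $$ (i,0)"
      unfolding A'_def using A W by (simp add: n_def assoc_mult_mat[of _ n n _ n _ n])
    also have "\<dots> = col W i \<bullet> col (A * W) 0" using that A W by (simp add: n_def)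
    also have "col (A * W) 0 = A *\<^sub>v col W 0" using A W by (intro col_mult2) (auto simp: n_def)
    also have "col W i \<bullet> (A *\<^sub>v col W 0) = e * (col W i \<bullet> col W 0)"
      unfolding ev using that W by (simp add: n_def)
    finally show ?thesis using cols_orth[of i 0] that by (simp add: n_def)
  qed
  define B where "B = mat m m (\<lambda>(i,j). A' $$ (Suc i, Suc j))"
  show thesis
  proof
    show "B \<in> carrier_mat m m" by (simp add: B_def)
    show "transpose_mat B = B"
      using transpose_mat_sym_index[OF A' A'_sym] by (intro eq_matI) (auto simp: B_def n_def)
    show "transpose_mat W * A * W = four_block_mat (mat 1 1 (\<lambda>_. e)) (0\<^sub>m 1 m) (0\<^sub>m m 1) B"
      unfolding A'_def[symmetric]
    proof (rule eq_matI)
      fix i j assume "i < dim_row (four_block_mat (mat 1 1 (\<lambda>_. e)) (0\<^sub>m 1 m) (0\<^sub>m m 1) B)"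
        "j < dim_col (four_block_mat (mat 1 1 (\<lambda>_. e)) (0\<^sub>m 1 m) (0\<^sub>m m 1) B)"
      then have ij: "i < n" "j < n" by (auto simp: B_def n_def)
      show "A' $$ (i, j) = four_block_mat (mat 1 1 (\<lambda>_. e)) (0\<^sub>m 1 m) (0\<^sub>m m 1) B $$ (i, j)"
        using ij A'_col0[OF ij(1)] A'_col0[OF ij(2)] transpose_mat_sym_index[OF A' A'_sym ij]
        by (cases i; cases j) (auto simp: B_def n_def)
    qed (use A' in \<open>auto simp: B_def n_def\<close>)
  qed
qed

lemma orthogonal_diagonalization_extend:
  fixes A W B Q :: "real mat"
  assumes A: "A \<in> carrier_mat (Suc m) (Suc m)"
    and W: "W \<in> carrier_mat (Suc m) (Suc m)" "transpose_mat W * W = 1\<^sub>m (Suc m)"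
      "transpose_mat W * A * W = four_block_mat (mat 1 1 (\<lambda>_. e)) (0\<^sub>m 1 m) (0\<^sub>m m 1) B"
    and Q: "Q \<in> carrier_mat m m" "transpose_mat Q * Q = 1\<^sub>m m" "transpose_mat Q * B * Q = mat_diag m es"
    and B: "B \<in> carrier_mat m m"
  defines "P \<equiv> W * four_block_mat (1\<^sub>m 1) (0\<^sub>m 1 m) (0\<^sub>m m 1) Q"
  shows "P \<in> carrier_mat (Suc m) (Suc m)" "transpose_mat P * P = 1\<^sub>m (Suc m)"
    "transpose_mat P * A * P = mat_diag (Suc m) (case_nat e es)"
proof -
  define Qb where "Qb = four_block_mat (1\<^sub>m 1) (0\<^sub>m 1 m) (0\<^sub>m m 1) Q"
  have Qb: "Qb \<in> carrier_mat (Suc m) (Suc m)"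
    using four_block_carrier_mat[of "1\<^sub>m 1" 1 1 Q m m] Q by (simp add: Qb_def)
  have Qb_T: "transpose_mat Qb = four_block_mat (1\<^sub>m 1) (0\<^sub>m 1 m) (0\<^sub>m m 1) (transpose_mat Q)"
    unfolding Qb_def using Q by (subst transpose_four_block_mat) auto
  note block_mult = mult_four_block_mat[where ?nr1.0=1 and ?n1.0=1 and ?n2.0=m and ?nr2.0=m
      and ?nc1.0=1 and ?nc2.0=m]
  have P_eq: "P = W * Qb" by (simp add: P_def Qb_def)
  have P_T: "transpose_mat P = transpose_mat Qb * transpose_mat W"
    unfolding P_eq using W Qb by (simp add: transpose_mult[of _ "Suc m" "Suc m"])
  show "P \<in> carrier_mat (Suc m) (Suc m)" using W(1) Qb by (simp add: P_eq)
  have "transpose_mat P * P = transpose_mat Qb * (transpose_mat W * W) * Qb"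
    unfolding P_T unfolding P_eq using W(1) Qb
    by (simp add: assoc_mult_mat[of _ "Suc m" "Suc m" _ "Suc m" _ "Suc m"])
  also have "\<dots> = transpose_mat Qb * Qb" using W(2) Qb by simp
  also have "\<dots> = 1\<^sub>m (Suc m)"
    unfolding Qb_T unfolding Qb_def using Q by (subst block_mult) auto
  finally show "transpose_mat P * P = 1\<^sub>m (Suc m)" .
  have "transpose_mat P * A * P = transpose_mat Qb * (transpose_mat W * A * W) * Qb"
    unfolding P_T unfolding P_eq using W(1) Qb A
    by (simp add: assoc_mult_mat[of _ "Suc m" "Suc m" _ "Suc m" _ "Suc m"])
  also have "\<dots> = four_block_mat (mat 1 1 (\<lambda>_. e)) (0\<^sub>m 1 m) (0\<^sub>m m 1) (transpose_mat Q * B * Q)"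
    unfolding Qb_T W(3) unfolding Qb_def using Q B
    by (subst block_mult, auto, subst block_mult, auto)
  also have "\<dots> = mat_diag (Suc m) (case_nat e es)"
    unfolding Q(3) by (rule eq_matI) (auto simp: mat_diag_def split: nat.split)
  finally show "transpose_mat P * A * P = mat_diag (Suc m) (case_nat e es)" .
qed

theorem real_symmetric_orthogonal_diagonalization:
  fixes A :: "real mat"
  assumes "A \<in> carrier_mat n n" "transpose_mat A = A"
  obtains P es where "P \<in> carrier_mat n n" "transpose_mat P * P = 1\<^sub>m n"
    "transpose_mat P * A * P = mat_diag n es"
proof -
  have "\<exists>P es. P \<in> carrier_mat n n \<and> transpose_mat P * P = 1\<^sub>m n
      \<and> transpose_mat P * A * P = mat_diag n es"
    using assms
  proof (induction n arbitrary: A)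
    case 0
    then show ?case by (intro exI[of _ "1\<^sub>m 0"]) (auto intro!: eq_matI simp: mat_diag_def)
  next
    case (Suc m)
    obtain e v where v: "v \<in> carrier_vec (Suc m)" "v \<noteq> 0\<^sub>v (Suc m)" "A *\<^sub>v v = e \<cdot>\<^sub>v v"
      using real_symmetric_eigenvector[OF Suc.prems] by blast
    have "v \<bullet> v \<noteq> 0" using v(1,2) by (metis conjugate_square_eq_0_vec real_scalar_prod_conj)
    then have "v \<bullet> v > 0" using v(1) by (simp add: scalar_prod_def sum_nonneg order_le_neq_trans)
    define u where "u = (1 / sqrt (v \<bullet> v)) \<cdot>\<^sub>v v"
    have u: "u \<in> carrier_vec (Suc m)" "u \<bullet> u = 1" "A *\<^sub>v u = e \<cdot>\<^sub>v u"
      using v(1) \<open>v \<bullet> v > 0\<close> mult_mat_vec[OF Suc.prems(1) v(1)]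
      by (auto simp: u_def smult_scalar_prod_distrib scalar_prod_smult_distrib v(3) smult_smult_assoc)
    obtain W where W: "W \<in> carrier_mat (Suc m) (Suc m)" "transpose_mat W * W = 1\<^sub>m (Suc m)" "col W 0 = u"
      using orthogonal_mat_with_first_col[OF u(1,2)] by blast
    obtain B where B: "B \<in> carrier_mat m m" "transpose_mat B = B"
      and WAW: "transpose_mat W * A * W = four_block_mat (mat 1 1 (\<lambda>_. e)) (0\<^sub>m 1 m) (0\<^sub>m m 1) B"
      using symmetric_deflation[OF Suc.prems W(1,2)] u(3) W(3) by metis
    obtain Q fs where "Q \<in> carrier_mat m m" "transpose_mat Q * Q = 1\<^sub>m m"
      "transpose_mat Q * B * Q = mat_diag m fs"
      using Suc.IH[OF B] by blast
    from orthogonal_diagonalization_extend[OF Suc.prems(1) W(1,2) WAW this B(1)]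
    show ?case by blast
  qed
  then show thesis using that by blast
qed

lemma mat_diag_mult_vec:
  assumes "c \<in> carrier_vec n"
  shows "mat_diag n f *\<^sub>v c = vec n (\<lambda>i. f i * c $ i)"
  using assms by (intro eq_vecI)
    (auto simp: mat_diag_def scalar_prod_def sum.delta if_distrib[of "\<lambda>x. x * _"] cong: if_cong)

lemma quadratic_form_mat_diag:
  fixes c :: "'a :: comm_ring_1 vec"
  assumes "c \<in> carrier_vec n"
  shows "c \<bullet> (mat_diag n f *\<^sub>v c) = (\<Sum>j<n. f j * (c $ j)^2)"
  using assms by (simp add: mat_diag_mult_vec scalar_prod_def atLeast0LessThan power2_eq_square mult_ac)

lemma char_poly_mat_diag: "char_poly (mat_diag n f) = (\<Prod>j<n. [:- f j, 1:])"
proof -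
  have "diag_mat (mat_diag n f) = map f [0..<n]"
    by (intro nth_equalityI) (auto simp: diag_mat_def mat_diag_def)
  moreover have "upper_triangular (mat_diag n f)"
    by (auto simp: upper_triangular_def mat_diag_def)
  ultimately have "char_poly (mat_diag n f) = (\<Prod>a\<leftarrow>map f [0..<n]. [:- a, 1:])"
    using char_poly_upper_triangular[OF mat_diag_dim] by metis
  also have "\<dots> = (\<Prod>j<n. [:- f j, 1:])"
    using prod.distinct_set_conv_list[of "[0..<n]" "\<lambda>j. [:- f j, 1:]"]
    by (simp add: comp_def atLeast0LessThan)
  finally show ?thesis .
qed

lemma orthogonal_mult_transpose_vec:
  fixes P :: "'a :: comm_ring_1 mat"
  assumes "P \<in> carrier_mat n n" "P * transpose_mat P = 1\<^sub>m n" "b \<in> carrier_vec n"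
  shows "P *\<^sub>v (transpose_mat P *\<^sub>v b) = b"
proof -
  have "(P * transpose_mat P) *\<^sub>v b = P *\<^sub>v (transpose_mat P *\<^sub>v b)"
    using assms by (intro assoc_mult_mat_vec) auto
  then show ?thesis using assms by simp
qed

lemma orthogonal_conj_mult_vec:
  fixes P M :: "'a :: comm_ring_1 mat"
  assumes P: "P \<in> carrier_mat n n" "P * transpose_mat P = 1\<^sub>m n"
    and "M \<in> carrier_mat n n" "b \<in> carrier_vec n"
  shows "(transpose_mat P * M * P) *\<^sub>v (transpose_mat P *\<^sub>v b) = transpose_mat P *\<^sub>v (M *\<^sub>v b)"
proof -
  have "(transpose_mat P * M * P) *\<^sub>v (transpose_mat P *\<^sub>v b)
      = (transpose_mat P * M) *\<^sub>v (P *\<^sub>v (transpose_mat P *\<^sub>v b))"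
    using assms by (intro assoc_mult_mat_vec) auto
  also have "\<dots> = transpose_mat P *\<^sub>v (M *\<^sub>v b)"
    using assms by (simp add: orthogonal_mult_transpose_vec)
  finally show ?thesis .
qed

lemma orthogonal_conj_scalar_prod:
  fixes P M :: "'a :: comm_ring_1 mat"
  assumes P: "P \<in> carrier_mat n n" "P * transpose_mat P = 1\<^sub>m n"
    and M: "M \<in> carrier_mat n n" and "a \<in> carrier_vec n" "b \<in> carrier_vec n"
  shows "(transpose_mat P *\<^sub>v a) \<bullet> ((transpose_mat P * M * P) *\<^sub>v (transpose_mat P *\<^sub>v b))
    = a \<bullet> (M *\<^sub>v b)"
  unfolding orthogonal_conj_mult_vec[OF P M \<open>b \<in> carrier_vec n\<close>]
  using assms orthogonal_mult_transpose_vec[OF P, of "M *\<^sub>v b"]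
  by (simp add: transpose_vec_mult_scalar[of P n n])

lemma char_poly_orthogonal_diagonalization:
  assumes S: "S \<in> carrier_mat n n"
    and P: "P \<in> carrier_mat n n" "transpose_mat P * P = 1\<^sub>m n" "P * transpose_mat P = 1\<^sub>m n"
    and diag: "transpose_mat P * S * P = mat_diag n es"
  shows "char_poly S = (\<Prod>j<n. [:- es j, 1:])"
proof -
  have "P * mat_diag n es * transpose_mat P = (P * transpose_mat P) * S * (P * transpose_mat P)"
    unfolding diag[symmetric] using S P(1) by (simp add: assoc_mult_mat[of _ n n _ n _ n])
  then have "S = P * mat_diag n es * transpose_mat P" using P(3) S by simp
  then have "similar_mat S (mat_diag n es)"
    using S P by (intro similar_matI[of _ _ P "transpose_mat P" n]) auto
  then show ?thesis using char_poly_similar char_poly_mat_diag by metis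
qed

lemma prod_linear_factors_remove_root:
  fixes es :: "nat \<Rightarrow> 'a :: comm_ring_1"
  assumes "p < n" "es p = 0"
  shows "(\<Prod>j<n. [:- es j, 1:]) = [:0, 1:] * (\<Prod>\<mu>\<leftarrow>map es (filter (\<lambda>j. j \<noteq> p) [0..<n]). [:- \<mu>, 1:])"
proof -
  have "[:- es p, 1:] = [:0, 1:]" using assms(2) by simp
  then have "(\<Prod>j<n. [:- es j, 1:]) = [:0, 1:] * (\<Prod>j\<in>{..<n} - {p}. [:- es j, 1:])"
    using prod.remove[of "{..<n}" p "\<lambda>j. [:- es j, 1:]"] assms(1) by simp
  also have "{..<n} - {p} = set (filter (\<lambda>j. j \<noteq> p) [0..<n])" by auto
  finally show ?thesis
    using prod.distinct_set_conv_list[of "filter (\<lambda>j. j \<noteq> p) [0..<n]" "\<lambda>j. [:- es j, 1:]"]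
    by (simp add: comp_def)
qed

lemma symmetric_quadratic_form_bounds:
  fixes S :: "real mat"
  assumes S: "S \<in> carrier_mat n n" "transpose_mat S = S"
    and spec: "\<forall>\<mu>s. char_poly S = [:0, 1:] * (\<Prod>\<mu>\<leftarrow>\<mu>s. [:- \<mu>, 1:])
          \<longrightarrow> (\<forall>\<mu>\<in>set \<mu>s. lmin \<le> \<mu> \<and> \<mu> \<le> lmax)"
    and u: "u \<in> carrier_vec n" "u \<noteq> 0\<^sub>v n" "S *\<^sub>v u = 0\<^sub>v n"
    and y: "y \<in> carrier_vec n" "y \<bullet> u = 0"
  shows "lmin * (y \<bullet> y) \<le> y \<bullet> (S *\<^sub>v y) \<and> y \<bullet> (S *\<^sub>v y) \<le> lmax * (y \<bullet> y)"
proof -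
  obtain P es where P: "P \<in> carrier_mat n n" "transpose_mat P * P = 1\<^sub>m n"
    and diag: "transpose_mat P * S * P = mat_diag n es"
    using real_symmetric_orthogonal_diagonalization[OF S] by blast
  have PPt: "P * transpose_mat P = 1\<^sub>m n"
    using mat_mult_left_right_inverse[OF _ P(1) P(2)] P(1) by simp
  note transfer = orthogonal_conj_scalar_prod[OF P(1) PPt]
  \<comment> \<open>coordinates in the orthonormal eigenbasis\<close>
  define c where "c = transpose_mat P *\<^sub>v y"
  define cu where "cu = transpose_mat P *\<^sub>v u"
  have c: "c \<in> carrier_vec n" "cu \<in> carrier_vec n" using P y u by (auto simp: c_def cu_def)
  have yy: "y \<bullet> y = (\<Sum>j<n. (c $ j)^2)"
    using transfer[of "1\<^sub>m n" y y] quadratic_form_mat_diag[OF c(1), of "\<lambda>_. 1"] P y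
    by (simp add: c_def mat_diag_one)
  have ySy: "y \<bullet> (S *\<^sub>v y) = (\<Sum>j<n. es j * (c $ j)^2)"
    using transfer[OF S(1) y(1) y(1)] quadratic_form_mat_diag[OF c(1)] by (simp add: c_def diag)
  have yu: "(\<Sum>j<n. c $ j * cu $ j) = 0"
    using transfer[of "1\<^sub>m n" y u] P y u by (simp add: c_def cu_def scalar_prod_def atLeast0LessThan)
  have kernel: "es j * cu $ j = 0" if "j < n" for j
  proof -
    have "mat_diag n es *\<^sub>v cu = transpose_mat P *\<^sub>v (S *\<^sub>v u)"
      unfolding diag[symmetric] cu_def using P(1) PPt S(1) u(1) by (rule orthogonal_conj_mult_vec)
    then have "mat_diag n es *\<^sub>v cu = 0\<^sub>v n" using u(3) P(1) by (auto intro!: eq_vecI)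
    then show ?thesis using that by (simp add: mat_diag_mult_vec[OF c(2)] vec_eq_iff)
  qed
  have "cu \<noteq> 0\<^sub>v n"
  proof
    assume "cu = 0\<^sub>v n"
    then have "u = P *\<^sub>v 0\<^sub>v n"
      using orthogonal_mult_transpose_vec[OF P(1) PPt u(1)] by (simp add: cu_def)
    with u(2) P(1) show False by auto
  qed
  then obtain p where p: "p < n" "cu $ p \<noteq> 0" using c(2) by (auto simp: vec_eq_iff)
  have es_p: "es p = 0" using kernel[OF p(1)] p(2) by simp
  \<comment> \<open>removing the zero eigenvalue \<open>es p\<close> leaves the nontrivial spectrum of \<open>S\<close>\<close>
  have "char_poly S = [:0, 1:] * (\<Prod>\<mu>\<leftarrow>map es (filter (\<lambda>j. j \<noteq> p) [0..<n]). [:- \<mu>, 1:])"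
    using char_poly_orthogonal_diagonalization[OF S(1) P PPt diag]
      prod_linear_factors_remove_root[of p n es, OF p(1) es_p] by (rule trans)
  then have "\<forall>\<mu>\<in>set (map es (filter (\<lambda>j. j \<noteq> p) [0..<n])). lmin \<le> \<mu> \<and> \<mu> \<le> lmax"
    using spec by blast
  then have range: "lmin \<le> es j \<and> es j \<le> lmax" if "j < n" "j \<noteq> p" for j
    using that by auto
  \<comment> \<open>if \<open>0 \<notin> [lmin, lmax]\<close>, then \<open>u\<close> is a multiple of the \<open>p\<close>-th eigenvector and \<open>y \<bottom> u\<close>\<close>
  have c_p: "c $ p = 0" if "\<not> (lmin \<le> 0 \<and> 0 \<le> lmax)"
  proof -
    have "cu $ j = 0" if "j < n" "j \<noteq> p" for j
      using kernel[OF that(1)] range[OF that] \<open>\<not> (lmin \<le> 0 \<and> 0 \<le> lmax)\<close> by auto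
    then have "(\<Sum>j<n. c $ j * cu $ j) = c $ p * cu $ p"
      using p(1) by (subst sum.remove[of _ p]) auto
    then show ?thesis using yu p(2) by simp
  qed
  have "lmin * (c $ j)^2 \<le> es j * (c $ j)^2 \<and> es j * (c $ j)^2 \<le> lmax * (c $ j)^2" if "j < n" for j
  proof (cases "j = p")
    case True
    then show ?thesis using es_p c_p by (cases "lmin \<le> 0 \<and> 0 \<le> lmax") (auto intro: mult_nonpos_nonneg)
  next
    case False
    then show ?thesis using range[OF that False] by (auto intro: mult_right_mono)
  qed
  then show ?thesis
    unfolding yy ySy sum_distrib_left by (auto intro: sum_mono)
qed

section \<open>Normalized graph Laplacians\<close>

lemma char_poly_normalized_laplacian_symmetrize:
  fixes a :: "nat \<Rightarrow> nat \<Rightarrow> real" and d :: "nat \<Rightarrow> real"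
  assumes d_pos: "\<And>i. i < m \<Longrightarrow> 0 < d i"
  shows "char_poly (mat m m (\<lambda>(i,j). (if i = j then 1 else 0) - a i j / d i))
    = char_poly (mat m m (\<lambda>(i,j). (if i = j then 1 else 0) - a i j / (sqrt (d i) * sqrt (d j))))"
    (is "char_poly ?L = char_poly ?S")
proof (rule char_poly_similar)
  \<comment> \<open>conjugation by \<open>D^(1/2)\<close> turns \<open>I - D^(-1) A\<close> into \<open>I - D^(-1/2) A D^(-1/2)\<close>\<close>
  have sqrt_d: "sqrt (d i) > 0" "d i \<noteq> 0" "\<bar>d i\<bar> = d i" if "i < m" for i
    using d_pos[OF that] by auto
  have S: "?S \<in> carrier_mat m m" by simp
  have L_eq: "?L = mat_diag m (\<lambda>i. 1 / sqrt (d i)) * ?S * mat_diag m (\<lambda>i. sqrt (d i))"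
    unfolding mat_diag_mult_left[OF S]
    by (subst mat_diag_mult_right[of _ m])
      (use sqrt_d in \<open>auto intro!: eq_matI simp: field_simps\<close>)
  have inverse: "mat_diag m (\<lambda>i. 1 / sqrt (d i)) * mat_diag m (\<lambda>i. sqrt (d i)) = 1\<^sub>m m"
    "mat_diag m (\<lambda>i. sqrt (d i)) * mat_diag m (\<lambda>i. 1 / sqrt (d i)) = 1\<^sub>m m"
    unfolding mat_diag_diag using sqrt_d by (auto intro!: eq_matI simp: mat_diag_def)
  have "{?L, ?S, mat_diag m (\<lambda>i. 1 / sqrt (d i)), mat_diag m (\<lambda>i. sqrt (d i))} \<subseteq> carrier_mat m m"
    by simp
  then show "similar_mat ?L ?S" by (rule similar_matI[OF _ inverse L_eq])
qed

lemma symmetric_normalized_laplacian_mult_vec: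
  fixes a :: "nat \<Rightarrow> nat \<Rightarrow> real" and d z :: "nat \<Rightarrow> real"
  assumes d_pos: "\<And>i. i < m \<Longrightarrow> 0 < d i" and i: "i < m"
  shows "(mat m m (\<lambda>(i,j). (if i = j then 1 else 0) - a i j / (sqrt (d i) * sqrt (d j)))
      *\<^sub>v vec m (\<lambda>j. sqrt (d j) * z j)) $ i = sqrt (d i) * z i - (\<Sum>j<m. a i j * z j) / sqrt (d i)"
proof -
  have sqrt_d: "sqrt (d j) > 0" "d j \<noteq> 0" if "j < m" for j
    using d_pos[OF that] by auto
  have "(mat m m (\<lambda>(i,j). (if i = j then 1 else 0) - a i j / (sqrt (d i) * sqrt (d j)))
      *\<^sub>v vec m (\<lambda>j. sqrt (d j) * z j)) $ i
      = (\<Sum>j<m. (if i = j then sqrt (d j) * z j else 0) - a i j * z j / sqrt (d i))"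
    using i sqrt_d by (auto simp: scalar_prod_def atLeast0LessThan field_simps intro!: sum.cong)
  then show ?thesis using i by (simp add: sum_subtractf sum_divide_distrib)
qed

lemma normalized_laplacian_quadratic_bounds:
  fixes a :: "nat \<Rightarrow> nat \<Rightarrow> real" and d x :: "nat \<Rightarrow> real"
  assumes a_sym: "\<And>i j. i < m \<Longrightarrow> j < m \<Longrightarrow> a i j = a j i"
    and d_pos: "\<And>i. i < m \<Longrightarrow> 0 < d i"
    and d_row: "\<And>i. i < m \<Longrightarrow> d i = (\<Sum>j<m. a i j)"
    and spec: "\<forall>\<mu>s. char_poly (mat m m (\<lambda>(i,j). (if i = j then 1 else 0) - a i j / d i))
          = [:0, 1:] * (\<Prod>\<mu>\<leftarrow>\<mu>s. [:- \<mu>, 1:]) \<longrightarrow> (\<forall>\<mu>\<in>set \<mu>s. lmin \<le> \<mu> \<and> \<mu> \<le> lmax)"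
    and x_orth: "(\<Sum>i<m. d i * x i) = 0"
  shows "lmin * (\<Sum>i<m. d i * (x i)^2)
        \<le> (\<Sum>i<m. d i * (x i)^2) - (\<Sum>i<m. \<Sum>j<m. a i j * x i * x j)
    \<and> (\<Sum>i<m. d i * (x i)^2) - (\<Sum>i<m. \<Sum>j<m. a i j * x i * x j)
        \<le> lmax * (\<Sum>i<m. d i * (x i)^2)"
proof (cases "m = 0")
  case False
  define S where "S = mat m m (\<lambda>(i,j). (if i = j then 1 else 0) - a i j / (sqrt (d i) * sqrt (d j)))"
  have S: "S \<in> carrier_mat m m" "transpose_mat S = S"
    using a_sym by (auto intro!: eq_matI simp: S_def mult.commute)
  have spec_S: "\<forall>\<mu>s. char_poly S = [:0, 1:] * (\<Prod>\<mu>\<leftarrow>\<mu>s. [:- \<mu>, 1:])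
      \<longrightarrow> (\<forall>\<mu>\<in>set \<mu>s. lmin \<le> \<mu> \<and> \<mu> \<le> lmax)"
    using spec char_poly_normalized_laplacian_symmetrize[OF d_pos, where a = a] unfolding S_def by simp
  have S_mult: "(S *\<^sub>v vec m (\<lambda>j. sqrt (d j) * z j)) $ i
      = sqrt (d i) * z i - (\<Sum>j<m. a i j * z j) / sqrt (d i)" if "i < m" for i z
    unfolding S_def using d_pos that by (rule symmetric_normalized_laplacian_mult_vec)
  have sqrt_d: "sqrt (d i) * sqrt (d i) = d i" "sqrt (d i) > 0" "d i \<noteq> 0" if "i < m" for i
    using d_pos[OF that] by auto
  \<comment> \<open>\<open>u = D^(1/2) 1\<close> lies in the kernel of \<open>S\<close>, and \<open>y = D^(1/2) x\<close> is orthogonal to it\<close>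
  define y where "y = vec m (\<lambda>i. sqrt (d i) * x i)"
  define u where "u = vec m (\<lambda>i. sqrt (d i))"
  have Su: "S *\<^sub>v u = 0\<^sub>v m"
  proof (rule eq_vecI)
    fix i assume "i < dim_vec (0\<^sub>v m :: real vec)"
    then have i: "i < m" by simp
    have "(S *\<^sub>v u) $ i = sqrt (d i) - d i / sqrt (d i)"
      using S_mult[OF i, of "\<lambda>_. 1"] d_row[OF i] by (simp add: u_def)
    then show "(S *\<^sub>v u) $ i = 0\<^sub>v m $ i" using d_pos[OF i] i by (simp add: real_div_sqrt)
  qed (simp add: S_def)
  have "u \<noteq> 0\<^sub>v m" using sqrt_d[of 0] False by (auto simp: u_def vec_eq_iff)
  have "y \<bullet> u = 0"
    using x_orth sqrt_d by (simp add: y_def u_def scalar_prod_def atLeast0LessThan mult_ac)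
  then have "lmin * (y \<bullet> y) \<le> y \<bullet> (S *\<^sub>v y) \<and> y \<bullet> (S *\<^sub>v y) \<le> lmax * (y \<bullet> y)"
    using symmetric_quadratic_form_bounds[OF S spec_S _ \<open>u \<noteq> 0\<^sub>v m\<close> Su] by (simp add: y_def u_def)
  moreover have "y \<bullet> y = (\<Sum>i<m. d i * (x i)^2)"
    using sqrt_d by (simp add: y_def scalar_prod_def atLeast0LessThan power2_eq_square mult_ac)
  moreover have "y \<bullet> (S *\<^sub>v y) = (\<Sum>i<m. d i * (x i)^2) - (\<Sum>i<m. \<Sum>j<m. a i j * x i * x j)"
  proof -
    have "y \<bullet> (S *\<^sub>v y)
        = (\<Sum>i<m. sqrt (d i) * x i * (sqrt (d i) * x i - (\<Sum>j<m. a i j * x j) / sqrt (d i)))"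
      using S(1) S_mult[of _ x] by (simp add: y_def scalar_prod_def atLeast0LessThan)
    also have "\<dots> = (\<Sum>i<m. d i * (x i)^2 - (\<Sum>j<m. a i j * x i * x j))"
      using sqrt_d by (intro sum.cong refl) (auto simp: field_simps sum_distrib_left power2_eq_square)
    finally show ?thesis by (simp add: sum_subtractf)
  qed
  ultimately show ?thesis by simp
qed simp

section \<open>Localization to links\<close>

lemma sum_nth_sorted_list_of_set:
  assumes "finite A"
  shows "(\<Sum>x\<in>A. g x) = (\<Sum>i<length (sorted_list_of_set A). g (sorted_list_of_set A ! i))"
proof -
  let ?vs = "sorted_list_of_set A"
  have "(\<lambda>i. ?vs ! i) ` {..<length ?vs} = set ?vs" by (auto simp: set_conv_nth)
  then have "bij_betw (\<lambda>i. ?vs ! i) {..<length ?vs} A"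
    unfolding bij_betw_def using assms by (auto intro!: inj_on_nth)
  then show ?thesis by (simp add: sum.reindex_bij_betw[symmetric])
qed

definition link_cochain :: "'v::linorder set \<Rightarrow> ('v set \<Rightarrow> real) \<Rightarrow> 'v \<Rightarrow> real" where
  "link_cochain \<sigma> f v = incidence (insert v \<sigma>) \<sigma> * f (insert v \<sigma>)"

lemma incidence_insert_sq:
  assumes "v \<notin> \<sigma>"
  shows "incidence (insert v \<sigma>) \<sigma> * incidence (insert v \<sigma>) \<sigma> = 1"
proof -
  have "insert v \<sigma> - \<sigma> = {v}" using assms by auto
  then show ?thesis
    unfolding incidence_def
    by (simp add: subset_insertI power_mult_distrib[symmetric] power_even_eq[symmetric])
qed

lemma link_adj_commute: "link_adj X \<sigma> v w = link_adj X \<sigma> w v"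
  unfolding link_adj_def by (auto simp: insert_commute)

context
  fixes X :: "'v::linorder set set"
  assumes complex: "simplicial_complex X"
begin

lemma finite_faces: "finite (faces X c)"
  using complex by (simp add: simplicial_complex_def faces_def)

lemma face_finite: "F \<in> X \<Longrightarrow> finite F"
  using complex by (simp add: simplicial_complex_def)

lemma subface_closed: "F \<in> X \<Longrightarrow> G \<subseteq> F \<Longrightarrow> G \<in> X"
  using complex by (simp add: simplicial_complex_def)

lemma link_vertices_eq:
  assumes "\<sigma> \<in> X"
  shows "link_vertices X \<sigma> = {v. v \<notin> \<sigma> \<and> insert v \<sigma> \<in> X}"
  unfolding link_vertices_def link_def using subface_closed[of "insert v \<sigma>" "{v}" for v] by auto

lemma finite_link_vertices:
  assumes "\<sigma> \<in> X"
  shows "finite (link_vertices X \<sigma>)"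
proof (rule finite_subset)
  show "link_vertices X \<sigma> \<subseteq> \<Union>X" unfolding link_vertices_eq[OF assms] by auto
  show "finite (\<Union>X)" using complex face_finite by (auto simp: simplicial_complex_def)
qed

lemma link_adj_iff:
  assumes "\<sigma> \<in> X"
  shows "link_adj X \<sigma> v w \<longleftrightarrow> v \<noteq> w \<and> v \<notin> \<sigma> \<and> w \<notin> \<sigma> \<and> insert v (insert w \<sigma>) \<in> X"
  unfolding link_adj_def link_def using subface_closed[of "insert v (insert w \<sigma>)" "{v,w}"]
  by (auto simp: insert_commute)

lemma card_cofaces:
  assumes F: "F \<in> X"
  shows "card {H \<in> faces X (card F + 1). F \<subseteq> H} = card {w. w \<notin> F \<and> insert w F \<in> X}"
proof -
  have "{H \<in> faces X (card F + 1). F \<subseteq> H} = (\<lambda>w. insert w F) ` {w. w \<notin> F \<and> insert w F \<in> X}"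
  proof
    show "{H \<in> faces X (card F + 1). F \<subseteq> H} \<subseteq> (\<lambda>w. insert w F) ` {w. w \<notin> F \<and> insert w F \<in> X}"
    proof
      fix H assume "H \<in> {H \<in> faces X (card F + 1). F \<subseteq> H}"
      then have H: "H \<in> X" "card H = card F + 1" "F \<subseteq> H" by (auto simp: faces_def)
      then have "card (H - F) = 1" using face_finite F by (simp add: card_Diff_subset)
      then obtain w where "H - F = {w}" by (auto simp: card_Suc_eq)
      then have "H = insert w F" "w \<notin> F" using H(3) by auto
      then show "H \<in> (\<lambda>w. insert w F) ` {w. w \<notin> F \<and> insert w F \<in> X}" using H(1) by auto
    qed
    show "(\<lambda>w. insert w F) ` {w. w \<notin> F \<and> insert w F \<in> X} \<subseteq> {H \<in> faces X (card F + 1). F \<subseteq> H}"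
      using face_finite[OF F] by (auto simp: faces_def)
  qed
  also have "card \<dots> = card {w. w \<notin> F \<and> insert w F \<in> X}"
    by (rule card_image) (auto simp: inj_on_def insert_ident)
  finally show ?thesis .
qed

lemma deg_pos:
  assumes pure: "pure_dim X k" and F: "F \<in> faces X k"
  shows "0 < deg X k F"
proof -
  have "finite {H\<in>X. F \<subseteq> H}" "{H\<in>X. F \<subseteq> H} \<noteq> {}"
    using complex F by (auto simp: simplicial_complex_def faces_def)
  from finite_has_maximal[OF this] obtain H where H: "H \<in> X" "F \<subseteq> H"
    and max: "\<forall>G\<in>{H\<in>X. F \<subseteq> H}. H \<le> G \<longrightarrow> H = G" by blast
  have "\<forall>G\<in>X. H \<subseteq> G \<longrightarrow> G = H" using H(2) max by blast
  then have "card H = k + 1" using pure H(1) unfolding pure_dim_def by blast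
  then have "H \<in> {H \<in> faces X (k + 1). F \<subseteq> H}" using H by (simp add: faces_def)
  moreover have "finite {H \<in> faces X (k + 1). F \<subseteq> H}" using finite_faces by simp
  ultimately show ?thesis unfolding deg_def by (auto simp: card_gt_0_iff)
qed

lemma inner_w_self_pos:
  assumes pure: "pure_dim X k" and F: "F \<in> faces X k" "f F \<noteq> 0"
  shows "0 < inner_w X k f f"
  unfolding inner_w_def
proof (rule sum_pos2[OF finite_faces F(1)])
  show "0 < real (deg X k F) * f F * f F"
    using deg_pos[OF pure F(1)] F(2) by (auto simp: mult.assoc zero_less_mult_iff linorder_neq_iff)
qed (simp add: mult.assoc)

context
  fixes k :: nat
  assumes k: "k \<ge> 1"
begin

lemma card_insert_face:
  assumes "\<sigma> \<in> faces X (k - 1)" "v \<notin> \<sigma>"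
  shows "card (insert v \<sigma>) = k"
  using assms k face_finite by (auto simp: faces_def)

lemma insert_link_vertex_face:
  assumes "\<sigma> \<in> faces X (k - 1)" "v \<in> link_vertices X \<sigma>"
  shows "insert v \<sigma> \<in> faces X k" "v \<notin> \<sigma>"
  using assms card_insert_face link_vertices_eq by (auto simp: faces_def)

lemma link_degree_eq_deg:
  assumes \<sigma>: "\<sigma> \<in> faces X (k - 1)" and v: "v \<in> link_vertices X \<sigma>"
  shows "link_degree X \<sigma> v = deg X k (insert v \<sigma>)"
proof -
  have \<sigma>X: "\<sigma> \<in> X" using \<sigma> by (simp add: faces_def)
  have F: "insert v \<sigma> \<in> faces X k" "v \<notin> \<sigma>" using insert_link_vertex_face[OF \<sigma> v] .
  have "{w \<in> link_vertices X \<sigma>. link_adj X \<sigma> v w} = {w. w \<notin> insert v \<sigma> \<and> insert w (insert v \<sigma>) \<in> X}"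
    unfolding link_vertices_eq[OF \<sigma>X] link_adj_iff[OF \<sigma>X] using F(2)
    by (auto simp: insert_commute intro: subface_closed[of "insert w (insert v \<sigma>)" "insert w \<sigma>" for w])
  then show ?thesis
    using card_cofaces[of "insert v \<sigma>"] F by (simp add: link_degree_def deg_def faces_def)
qed

lemma sum_link_vertices_eq_sum_faces:
  "(\<Sum>\<sigma>\<in>faces X (k - 1). \<Sum>v\<in>link_vertices X \<sigma>. h (insert v \<sigma>) v) = (\<Sum>F\<in>faces X k. \<Sum>v\<in>F. h F v)"
proof -
  let ?S = "faces X (k - 1)" and ?N = "faces X k"
  have bij: "bij_betw (\<lambda>(\<sigma>, v). (insert v \<sigma>, v)) (Sigma ?S (link_vertices X)) (Sigma ?N (\<lambda>F. F))"
  proof (rule bij_betw_byWitness[where f' = "\<lambda>(F, v). (F - {v}, v)"])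
    show "(\<lambda>(\<sigma>, v). (insert v \<sigma>, v)) ` Sigma ?S (link_vertices X) \<subseteq> Sigma ?N (\<lambda>F. F)"
      using insert_link_vertex_face by auto
    show "(\<lambda>(F, v). (F - {v}, v)) ` Sigma ?N (\<lambda>F. F) \<subseteq> Sigma ?S (link_vertices X)"
    proof
      fix p assume "p \<in> (\<lambda>(F, v). (F - {v}, v)) ` Sigma ?N (\<lambda>F. F)"
      then obtain F v where F: "F \<in> ?N" "v \<in> F" and p: "p = (F - {v}, v)" by auto
      then have "F \<in> X" "card F = k" "finite F" using face_finite by (auto simp: faces_def)
      then show "p \<in> Sigma ?S (link_vertices X)"
        using F subface_closed by (auto simp: p faces_def link_vertices_eq insert_absorb)
    qed
  qed (auto simp: insert_link_vertex_face)
  have "(\<Sum>\<sigma>\<in>?S. \<Sum>v\<in>link_vertices X \<sigma>. h (insert v \<sigma>) v)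
      = (\<Sum>(\<sigma>,v)\<in>Sigma ?S (link_vertices X). h (insert v \<sigma>) v)"
    using finite_link_vertices by (intro sum.Sigma finite_faces) (auto simp: faces_def)
  also have "\<dots> = (\<Sum>(F,v)\<in>Sigma ?N (\<lambda>F. F). h F v)"
    using sum.reindex_bij_betw[OF bij, of "\<lambda>(F,v). h F v"] by (simp add: split_def)
  also have "\<dots> = (\<Sum>F\<in>?N. \<Sum>v\<in>F. h F v)"
    using face_finite by (intro sum.Sigma[symmetric] finite_faces) (auto simp: faces_def)
  finally show ?thesis .
qed

lemma face_diff_singleton:
  assumes F: "F \<in> faces X k" and G: "G \<in> faces X k" and FG: "card (F \<inter> G) = k - 1"
  obtains v where "F - G = {v}"
proof -
  have "finite F" using F face_finite by (simp add: faces_def)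
  have "F - G = F - F \<inter> G" by blast
  then have "card (F - G) = card (F - F \<inter> G)" by simp
  also have "\<dots> = card F - card (F \<inter> G)" using \<open>finite F\<close> by (intro card_Diff_subset) auto
  also have "\<dots> = 1" using F FG k by (simp add: faces_def)
  finally show thesis using that by (auto simp: card_Suc_eq)
qed

lemma bij_betw_link_edges_adjacent_faces:
  "bij_betw (\<lambda>(\<sigma>, v, w). (insert v \<sigma>, insert w \<sigma>))
     (SIGMA \<sigma>:faces X (k - 1). {(v, w) \<in> link_vertices X \<sigma> \<times> link_vertices X \<sigma>. link_adj X \<sigma> v w})
     {(F, G) \<in> faces X k \<times> faces X k. card (F \<inter> G) = k - 1 \<and> F \<union> G \<in> faces X (k + 1)}"
  (is "bij_betw ?\<phi> ?E ?A")
proof (rule bij_betw_byWitness[where f' = "\<lambda>(F, G). (F \<inter> G, the_elem (F - G), the_elem (G - F))"])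
  let ?\<psi> = "\<lambda>(F, G). (F \<inter> G, the_elem (F - G), the_elem (G - F))"
  have E: "\<sigma> \<in> X" "card \<sigma> = k - 1" "v \<noteq> w" "v \<notin> \<sigma>" "w \<notin> \<sigma>" "insert v (insert w \<sigma>) \<in> X"
    if "(\<sigma>, v, w) \<in> ?E" for \<sigma> v w
  proof -
    have \<sigma>: "\<sigma> \<in> X" "card \<sigma> = k - 1" and "link_adj X \<sigma> v w" using that by (auto simp: faces_def)
    then show "\<sigma> \<in> X" "card \<sigma> = k - 1" "v \<noteq> w" "v \<notin> \<sigma>" "w \<notin> \<sigma>" "insert v (insert w \<sigma>) \<in> X"
      using link_adj_iff[OF \<sigma>(1)] by auto
  qed
  have A: "\<exists>v w. F - G = {v} \<and> G - F = {w}" if "(F, G) \<in> ?A" for F G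
  proof -
    have F: "F \<in> faces X k" and G: "G \<in> faces X k" and FG: "card (F \<inter> G) = k - 1" using that by auto
    then have GF: "card (G \<inter> F) = k - 1" by (simp add: Int_commute)
    obtain v where "F - G = {v}" using face_diff_singleton[OF F G FG] .
    moreover obtain w where "G - F = {w}" using face_diff_singleton[OF G F GF] .
    ultimately show ?thesis by blast
  qed
  show "\<forall>a\<in>?E. ?\<psi> (?\<phi> a) = a"
  proof
    fix a assume a: "a \<in> ?E"
    obtain \<sigma> v w where a_eq: "a = (\<sigma>, v, w)" by (cases a) auto
    have "v \<noteq> w" "v \<notin> \<sigma>" "w \<notin> \<sigma>" using E[of \<sigma> v w] a a_eq by auto
    then have "insert v \<sigma> \<inter> insert w \<sigma> = \<sigma>" "insert v \<sigma> - insert w \<sigma> = {v}"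
      "insert w \<sigma> - insert v \<sigma> = {w}" by auto
    then show "?\<psi> (?\<phi> a) = a" by (simp add: a_eq)
  qed
  show "\<forall>b\<in>?A. ?\<phi> (?\<psi> b) = b"
  proof
    fix b assume b: "b \<in> ?A"
    obtain F G where b_eq: "b = (F, G)" by (cases b) auto
    obtain v w where v: "F - G = {v}" and w: "G - F = {w}" using A b b_eq by blast
    have "insert v (F \<inter> G) = F" "insert w (F \<inter> G) = G" using v w by blast+
    then show "?\<phi> (?\<psi> b) = b" by (simp add: b_eq v w Int_commute)
  qed
  show "?\<phi> ` ?E \<subseteq> ?A"
  proof
    fix b assume "b \<in> ?\<phi> ` ?E"
    then obtain \<sigma> v w where a: "(\<sigma>, v, w) \<in> ?E" and b: "b = (insert v \<sigma>, insert w \<sigma>)" by auto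
    note h = E[OF a]
    have "finite \<sigma>" using h(1) face_finite by blast
    have "insert v \<sigma> \<in> X" "insert w \<sigma> \<in> X"
      using h(6) subface_closed[of "insert v (insert w \<sigma>)"] by auto
    moreover have "card (insert v \<sigma>) = k" "card (insert w \<sigma>) = k" "card (insert v (insert w \<sigma>)) = k + 1"
      using h(2-5) \<open>finite \<sigma>\<close> k by auto
    moreover have "insert v \<sigma> \<inter> insert w \<sigma> = \<sigma>" "insert v \<sigma> \<union> insert w \<sigma> = insert v (insert w \<sigma>)"
      using h(3-5) by auto
    ultimately show "b \<in> ?A" using h(2,6) by (simp add: b faces_def)
  qed
  show "?\<psi> ` ?A \<subseteq> ?E"
  proof
    fix a assume "a \<in> ?\<psi> ` ?A"
    then obtain F G where FG: "(F, G) \<in> ?A" and a: "a = ?\<psi> (F, G)" by auto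
    obtain v w where v: "F - G = {v}" and w: "G - F = {w}" using A[OF FG] by blast
    have F: "insert v (F \<inter> G) = F" and G: "insert w (F \<inter> G) = G" using v w by blast+
    have vw: "v \<noteq> w" "v \<notin> F \<inter> G" "w \<notin> F \<inter> G" using v w by auto
    have X: "F \<in> X" "G \<in> X" "F \<union> G \<in> X" "card (F \<inter> G) = k - 1" using FG by (auto simp: faces_def)
    then have \<sigma>: "F \<inter> G \<in> X" using subface_closed by blast
    have "insert v (insert w (F \<inter> G)) = F \<union> G" using F G by blast
    then have "link_adj X (F \<inter> G) v w" using link_adj_iff[OF \<sigma>] vw X by simp
    moreover have "v \<in> link_vertices X (F \<inter> G)" "w \<in> link_vertices X (F \<inter> G)"
      using link_vertices_eq[OF \<sigma>] vw F G X by auto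
    ultimately show "a \<in> ?E" using a \<sigma> X(4) v w by (simp add: faces_def)
  qed
qed

lemma sum_link_edges_eq_sum_adjacent_faces:
  "(\<Sum>\<sigma>\<in>faces X (k - 1). \<Sum>v\<in>link_vertices X \<sigma>. \<Sum>w\<in>link_vertices X \<sigma>.
      if link_adj X \<sigma> v w then T (insert v \<sigma>) (insert w \<sigma>) else 0)
   = (\<Sum>F\<in>faces X k. \<Sum>G\<in>faces X k. if card (F \<inter> G) = k - 1 \<and> F \<union> G \<in> faces X (k + 1) then T F G else 0)"
proof -
  let ?V = "link_vertices X"
  have fin_V: "finite (?V \<sigma>)" if "\<sigma> \<in> faces X (k - 1)" for \<sigma>
    using that finite_link_vertices by (simp add: faces_def)
  have "(\<Sum>\<sigma>\<in>faces X (k - 1). \<Sum>v\<in>?V \<sigma>. \<Sum>w\<in>?V \<sigma>. if link_adj X \<sigma> v w then T (insert v \<sigma>) (insert w \<sigma>) else 0)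
      = (\<Sum>\<sigma>\<in>faces X (k - 1). \<Sum>(v, w)\<in>{(v, w) \<in> ?V \<sigma> \<times> ?V \<sigma>. link_adj X \<sigma> v w}.
          T (insert v \<sigma>) (insert w \<sigma>))"
  proof (rule sum.cong[OF refl])
    fix \<sigma> assume "\<sigma> \<in> faces X (k - 1)"
    then have "finite (?V \<sigma> \<times> ?V \<sigma>)" using fin_V by simp
    then show "(\<Sum>v\<in>?V \<sigma>. \<Sum>w\<in>?V \<sigma>. if link_adj X \<sigma> v w then T (insert v \<sigma>) (insert w \<sigma>) else 0)
        = (\<Sum>(v, w)\<in>{(v, w) \<in> ?V \<sigma> \<times> ?V \<sigma>. link_adj X \<sigma> v w}. T (insert v \<sigma>) (insert w \<sigma>))"
      by (simp add: sum.cartesian_product sum.inter_filter[symmetric] case_prod_unfold mem_Times_iff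
          conj_assoc)
  qed
  also have "\<dots> = (\<Sum>(\<sigma>, v, w)\<in>(SIGMA \<sigma>:faces X (k - 1). {(v, w) \<in> ?V \<sigma> \<times> ?V \<sigma>. link_adj X \<sigma> v w}).
      T (insert v \<sigma>) (insert w \<sigma>))"
  proof (intro sum.Sigma finite_faces ballI)
    fix \<sigma> assume "\<sigma> \<in> faces X (k - 1)"
    then show "finite {(v, w) \<in> ?V \<sigma> \<times> ?V \<sigma>. link_adj X \<sigma> v w}"
      using fin_V by (auto intro: finite_subset[of _ "?V \<sigma> \<times> ?V \<sigma>"])
  qed
  also have "\<dots> = (\<Sum>(F, G)\<in>{(F, G) \<in> faces X k \<times> faces X k. card (F \<inter> G) = k - 1 \<and> F \<union> G \<in> faces X (k + 1)}.
      T F G)"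
    using sum.reindex_bij_betw[OF bij_betw_link_edges_adjacent_faces, of "\<lambda>(F, G). T F G"]
    by (simp add: split_def)
  also have "\<dots> = (\<Sum>F\<in>faces X k. \<Sum>G\<in>faces X k.
      if card (F \<inter> G) = k - 1 \<and> F \<union> G \<in> faces X (k + 1) then T F G else 0)"
  proof -
    have "finite (faces X k \<times> faces X k)" using finite_faces by simp
    from sum.inter_filter[OF this, of "\<lambda>p. T (fst p) (snd p)"
        "\<lambda>p. card (fst p \<inter> snd p) = k - 1 \<and> fst p \<union> snd p \<in> faces X (k + 1)"]
    show ?thesis by (simp add: sum.cartesian_product case_prod_unfold mem_Times_iff conj_assoc)
  qed
  finally show ?thesis .
qed

lemma orth_B_link_sum:
  assumes orth: "orth_B X k f" and \<sigma>: "\<sigma> \<in> faces X (k - 1)"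
  shows "(\<Sum>v\<in>link_vertices X \<sigma>. real (link_degree X \<sigma> v) * link_cochain \<sigma> f v) = 0"
proof -
  \<comment> \<open>orthogonality to the coboundary of the indicator cochain of \<open>\<sigma>\<close>\<close>
  define g where "g = (\<lambda>G. if G = \<sigma> then 1 else (0::real))"
  have cob: "coboundary X (k - 1) g H = incidence H \<sigma>" for H
    unfolding coboundary_def g_def using \<sigma> finite_faces[of "k - 1"]
    by (simp add: if_distrib[of "\<lambda>x. _ * x"] sum.delta' cong: if_cong)
  have \<sigma>X: "\<sigma> \<in> X" using \<sigma> by (simp add: faces_def)
  let ?I = "(\<lambda>v. insert v \<sigma>) ` link_vertices X \<sigma>"
  have "inner_w X k f (coboundary X (k - 1) g) = 0" using orth by (simp add: orth_B_def)
  then have "0 = (\<Sum>F\<in>faces X k. real (deg X k F) * f F * incidence F \<sigma>)"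
    unfolding inner_w_def cob by simp
  also have "\<dots> = (\<Sum>F\<in>?I. real (deg X k F) * f F * incidence F \<sigma>)"
  proof (rule sum.mono_neutral_right[OF finite_faces])
    show "?I \<subseteq> faces X k" using insert_link_vertex_face[OF \<sigma>] by auto
    show "\<forall>F\<in>faces X k - ?I. real (deg X k F) * f F * incidence F \<sigma> = 0"
    proof
      fix F assume F: "F \<in> faces X k - ?I"
      show "real (deg X k F) * f F * incidence F \<sigma> = 0"
      proof (cases "\<sigma> \<subseteq> F \<and> card (F - \<sigma>) = 1")
        case True
        then obtain v where "F - \<sigma> = {v}" by (auto simp: card_Suc_eq)
        then have "F = insert v \<sigma>" "v \<notin> \<sigma>" using True by auto
        then have "F \<in> ?I" using F link_vertices_eq[OF \<sigma>X] by (auto simp: faces_def)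
        then show ?thesis using F by simp
      next
        case False
        then have "incidence F \<sigma> = 0" unfolding incidence_def by auto
        then show ?thesis by simp
      qed
    qed
  qed
  also have "\<dots> = (\<Sum>v\<in>link_vertices X \<sigma>.
      real (deg X k (insert v \<sigma>)) * f (insert v \<sigma>) * incidence (insert v \<sigma>) \<sigma>)"
    by (subst sum.reindex) (auto simp: inj_on_def link_vertices_eq[OF \<sigma>X] insert_ident)
  also have "\<dots> = (\<Sum>v\<in>link_vertices X \<sigma>. real (link_degree X \<sigma> v) * link_cochain \<sigma> f v)"
    by (intro sum.cong refl) (simp add: link_degree_eq_deg[OF \<sigma>] link_cochain_def)
  finally show ?thesis by simp
qed

lemma sum_link_norms:
  "(\<Sum>\<sigma>\<in>faces X (k - 1). \<Sum>v\<in>link_vertices X \<sigma>. real (link_degree X \<sigma> v) * (link_cochain \<sigma> f v)^2)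
   = real k * inner_w X k f f"
proof -
  have "(\<Sum>\<sigma>\<in>faces X (k - 1). \<Sum>v\<in>link_vertices X \<sigma>. real (link_degree X \<sigma> v) * (link_cochain \<sigma> f v)^2)
      = (\<Sum>\<sigma>\<in>faces X (k - 1). \<Sum>v\<in>link_vertices X \<sigma>. real (deg X k (insert v \<sigma>)) * (f (insert v \<sigma>))^2)"
  proof (intro sum.cong refl)
    fix \<sigma> v assume \<sigma>: "\<sigma> \<in> faces X (k - 1)" and v: "v \<in> link_vertices X \<sigma>"
    have "(link_cochain \<sigma> f v)^2 = (f (insert v \<sigma>))^2"
      using incidence_insert_sq[OF insert_link_vertex_face(2)[OF \<sigma> v]]
      by (simp add: link_cochain_def power2_eq_square algebra_simps)
    then show "real (link_degree X \<sigma> v) * (link_cochain \<sigma> f v)^2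
        = real (deg X k (insert v \<sigma>)) * (f (insert v \<sigma>))^2"
      using link_degree_eq_deg[OF \<sigma> v] by simp
  qed
  also have "\<dots> = (\<Sum>F\<in>faces X k. \<Sum>v\<in>F. real (deg X k F) * (f F)^2)"
    by (rule sum_link_vertices_eq_sum_faces)
  also have "\<dots> = real k * inner_w X k f f"
    by (simp add: inner_w_def sum_distrib_left faces_def power2_eq_square mult_ac)
  finally show ?thesis .
qed

lemma sum_link_adjacency_forms:
  "(\<Sum>\<sigma>\<in>faces X (k - 1). \<Sum>v\<in>link_vertices X \<sigma>. \<Sum>w\<in>link_vertices X \<sigma>.
      if link_adj X \<sigma> v w then link_cochain \<sigma> f v * link_cochain \<sigma> f w else 0)
   = (\<Sum>F\<in>faces X k. \<Sum>G\<in>faces X k. adj_up X k F G * f F * f G)"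
proof -
  let ?T = "\<lambda>F G. adj_up X k F G * f F * f G"
  have "(\<Sum>\<sigma>\<in>faces X (k - 1). \<Sum>v\<in>link_vertices X \<sigma>. \<Sum>w\<in>link_vertices X \<sigma>.
      if link_adj X \<sigma> v w then link_cochain \<sigma> f v * link_cochain \<sigma> f w else 0)
    = (\<Sum>\<sigma>\<in>faces X (k - 1). \<Sum>v\<in>link_vertices X \<sigma>. \<Sum>w\<in>link_vertices X \<sigma>.
      if link_adj X \<sigma> v w then ?T (insert v \<sigma>) (insert w \<sigma>) else 0)"
  proof (intro sum.cong refl if_cong)
    fix \<sigma> v w assume \<sigma>: "\<sigma> \<in> faces X (k - 1)" and "link_adj X \<sigma> v w"
    then have h: "v \<noteq> w" "v \<notin> \<sigma>" "w \<notin> \<sigma>" "insert v (insert w \<sigma>) \<in> X" "card \<sigma> = k - 1" "finite \<sigma>"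
      using link_adj_iff[of \<sigma>] face_finite by (auto simp: faces_def)
    have "insert v \<sigma> \<inter> insert w \<sigma> = \<sigma>" "insert v \<sigma> \<union> insert w \<sigma> = insert v (insert w \<sigma>)"
      using h by auto
    moreover have "card (insert v (insert w \<sigma>)) = k + 1" using h k by auto
    ultimately show "link_cochain \<sigma> f v * link_cochain \<sigma> f w = ?T (insert v \<sigma>) (insert w \<sigma>)"
      using h by (simp add: adj_up_def faces_def link_cochain_def mult_ac)
  qed
  also have "\<dots> = (\<Sum>F\<in>faces X k. \<Sum>G\<in>faces X k.
      if card (F \<inter> G) = k - 1 \<and> F \<union> G \<in> faces X (k + 1) then ?T F G else 0)"
    by (rule sum_link_edges_eq_sum_adjacent_faces)
  also have "\<dots> = (\<Sum>F\<in>faces X k. \<Sum>G\<in>faces X k. ?T F G)"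
    by (intro sum.cong refl) (simp add: adj_up_def)
  finally show ?thesis .
qed

lemma inner_w_up_laplacian:
  assumes pure: "pure_dim X k"
  shows "inner_w X k (up_laplacian X k f) f
    = inner_w X k f f - (\<Sum>F\<in>faces X k. \<Sum>G\<in>faces X k. adj_up X k F G * f F * f G)"
proof -
  have "real (deg X k F) * up_laplacian X k f F * f F
      = real (deg X k F) * f F * f F - (\<Sum>G\<in>faces X k. adj_up X k F G * f F * f G)"
    if "F \<in> faces X k" for F
    using deg_pos[OF pure that]
    by (simp add: up_laplacian_def field_simps sum_distrib_left sum_distrib_right)
  then show ?thesis by (simp add: inner_w_def sum_subtractf)
qed

lemma link_quadratic_form_bounds:
  assumes pure: "pure_dim X k"
    and spec: "\<forall>\<mu>s. char_poly (link_laplacian X \<sigma>) = [:0, 1:] * (\<Prod>\<mu>\<leftarrow>\<mu>s. [:- \<mu>, 1:])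
          \<longrightarrow> (\<forall>\<mu>\<in>set \<mu>s. lmin \<le> \<mu> \<and> \<mu> \<le> lmax)"
    and \<sigma>: "\<sigma> \<in> faces X (k - 1)" and orth: "orth_B X k f"
  defines "N \<equiv> \<Sum>v\<in>link_vertices X \<sigma>. real (link_degree X \<sigma> v) * (link_cochain \<sigma> f v)^2"
    and "M \<equiv> \<Sum>v\<in>link_vertices X \<sigma>. \<Sum>w\<in>link_vertices X \<sigma>.
      if link_adj X \<sigma> v w then link_cochain \<sigma> f v * link_cochain \<sigma> f w else 0"
  shows "lmin * N \<le> N - M \<and> N - M \<le> lmax * N"
proof -
  let ?V = "link_vertices X \<sigma>"
  have fin: "finite ?V" using finite_link_vertices \<sigma> by (simp add: faces_def)
  \<comment> \<open>\<open>link_laplacian\<close> lists the vertices of the link in increasing order\<close>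
  define vs where "vs = sorted_list_of_set ?V"
  define m where "m = length vs"
  have vs: "vs ! i \<in> ?V" if "i < m" for i
    using that fin nth_mem[of i vs] by (simp add: vs_def m_def)
  have reindex: "(\<Sum>v\<in>?V. g v) = (\<Sum>i<m. g (vs ! i))" for g :: "'v \<Rightarrow> real"
    unfolding vs_def m_def by (rule sum_nth_sorted_list_of_set[OF fin])
  define a where "a i j = (if link_adj X \<sigma> (vs ! i) (vs ! j) then 1 else (0::real))" for i j
  define d where "d i = real (link_degree X \<sigma> (vs ! i))" for i
  define x where "x i = link_cochain \<sigma> f (vs ! i)" for i
  have "link_laplacian X \<sigma> = mat m m (\<lambda>(i,j). (if i = j then 1 else 0) - a i j / d i)"
    unfolding link_laplacian_def Let_def vs_def[symmetric] m_def[symmetric] a_def d_def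
    by (intro cong_mat refl) auto
  moreover have "0 < d i" if "i < m" for i
    using deg_pos[OF pure insert_link_vertex_face(1)[OF \<sigma> vs[OF that]]]
    by (simp add: d_def link_degree_eq_deg[OF \<sigma> vs[OF that]])
  moreover have "d i = (\<Sum>j<m. a i j)" for i
    using reindex[of "\<lambda>w. if link_adj X \<sigma> (vs ! i) w then 1 else 0"] fin
    by (simp add: d_def a_def link_degree_def sum.inter_filter[symmetric])
  moreover have "(\<Sum>i<m. d i * x i) = 0"
    using orth_B_link_sum[OF orth \<sigma>] reindex by (simp add: d_def x_def)
  ultimately have "lmin * (\<Sum>i<m. d i * (x i)^2)
        \<le> (\<Sum>i<m. d i * (x i)^2) - (\<Sum>i<m. \<Sum>j<m. a i j * x i * x j)
      \<and> (\<Sum>i<m. d i * (x i)^2) - (\<Sum>i<m. \<Sum>j<m. a i j * x i * x j)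
        \<le> lmax * (\<Sum>i<m. d i * (x i)^2)"
    using spec by (intro normalized_laplacian_quadratic_bounds) (auto simp: a_def link_adj_commute)
  moreover have "(\<Sum>i<m. d i * (x i)^2) = N"
    unfolding N_def reindex by (simp add: d_def x_def)
  moreover have "(\<Sum>i<m. \<Sum>j<m. a i j * x i * x j) = M"
    unfolding M_def reindex by (intro sum.cong refl) (simp add: a_def x_def)
  ultimately show ?thesis by simp
qed

lemma up_laplacian_quadratic_bounds:
  assumes pure: "pure_dim X k"
    and spec: "\<forall>\<sigma>\<in>faces X (k - 1). \<forall>\<mu>s.
          char_poly (link_laplacian X \<sigma>) = [:0, 1:] * (\<Prod>\<mu>\<leftarrow>\<mu>s. [:- \<mu>, 1:])
          \<longrightarrow> (\<forall>\<mu>\<in>set \<mu>s. lmin \<le> \<mu> \<and> \<mu> \<le> lmax)"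
    and orth: "orth_B X k f"
  shows "(1 + real k * lmin - real k) * inner_w X k f f \<le> inner_w X k (up_laplacian X k f) f
       \<and> inner_w X k (up_laplacian X k f) f \<le> (1 + real k * lmax - real k) * inner_w X k f f"
proof -
  let ?S = "faces X (k - 1)"
  define N where "N \<sigma> = (\<Sum>v\<in>link_vertices X \<sigma>. real (link_degree X \<sigma> v) * (link_cochain \<sigma> f v)^2)" for \<sigma>
  define M where "M \<sigma> = (\<Sum>v\<in>link_vertices X \<sigma>. \<Sum>w\<in>link_vertices X \<sigma>.
      if link_adj X \<sigma> v w then link_cochain \<sigma> f v * link_cochain \<sigma> f w else 0)" for \<sigma>
  \<comment> \<open>Garland's method: the global quadratic forms are sums of the local ones over the links\<close>
  have N: "(\<Sum>\<sigma>\<in>?S. N \<sigma>) = real k * inner_w X k f f"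
    unfolding N_def by (rule sum_link_norms)
  have M: "inner_w X k (up_laplacian X k f) f = inner_w X k f f - (\<Sum>\<sigma>\<in>?S. M \<sigma>)"
    unfolding M_def sum_link_adjacency_forms by (rule inner_w_up_laplacian[OF pure])
  have "lmin * N \<sigma> \<le> N \<sigma> - M \<sigma> \<and> N \<sigma> - M \<sigma> \<le> lmax * N \<sigma>" if "\<sigma> \<in> ?S" for \<sigma>
    unfolding N_def M_def using spec that by (intro link_quadratic_form_bounds[OF pure _ that orth]) blast
  then have "lmin * (\<Sum>\<sigma>\<in>?S. N \<sigma>) \<le> (\<Sum>\<sigma>\<in>?S. N \<sigma>) - (\<Sum>\<sigma>\<in>?S. M \<sigma>)"
    "(\<Sum>\<sigma>\<in>?S. N \<sigma>) - (\<Sum>\<sigma>\<in>?S. M \<sigma>) \<le> lmax * (\<Sum>\<sigma>\<in>?S. N \<sigma>)"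
    unfolding sum_distrib_left sum_subtractf[symmetric] by (auto intro: sum_mono)
  then show ?thesis unfolding N M by (simp add: algebra_simps)
qed

end

end


theorem theorem3p1:
  fixes X :: "'v::linorder set set" and k :: nat and lmin lmax :: real
  assumes "simplicial_complex X"
    and "k \<ge> 1"
    and "pure_dim X k"
    and link_spec: "\<forall>F\<in>faces X (k - 1). \<forall>\<mu>s.
          char_poly (link_laplacian X F) = [:0, 1:] * (\<Prod>\<mu>\<leftarrow>\<mu>s. [:- \<mu>, 1:])
          \<longrightarrow> (\<forall>\<mu>\<in>set \<mu>s. lmin \<le> \<mu> \<and> \<mu> \<le> lmax)"
  shows "(\<forall>f. orth_B X k f \<longrightarrow>
            (1 + real k * lmin - real k) * inner_w X k f f \<le> inner_w X k (up_laplacian X k f) f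
          \<and> inner_w X k (up_laplacian X k f) f \<le> (1 + real k * lmax - real k) * inner_w X k f f)
       \<and> (\<forall>f ev. orth_B X k f \<and> (\<exists>F\<in>faces X k. f F \<noteq> 0)
               \<and> (\<forall>F\<in>faces X k. up_laplacian X k f F = ev * f F)
            \<longrightarrow> 1 + real k * lmin - real k \<le> ev \<and> ev \<le> 1 + real k * lmax - real k)"
proof -
  note bounds = up_laplacian_quadratic_bounds[OF assms]
  have "1 + real k * lmin - real k \<le> ev \<and> ev \<le> 1 + real k * lmax - real k"
    if eigen: "orth_B X k f \<and> (\<exists>F\<in>faces X k. f F \<noteq> 0) \<and> (\<forall>F\<in>faces X k. up_laplacian X k f F = ev * f F)"
    for f ev
  proof -
    have "inner_w X k (up_laplacian X k f) f = ev * inner_w X k f f"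
      using eigen by (simp add: inner_w_def sum_distrib_left mult_ac)
    moreover have "0 < inner_w X k f f"
      using eigen inner_w_self_pos[OF assms(1,3)] by blast
    ultimately show ?thesis using bounds[of f] eigen by (auto simp: mult_le_cancel_right)
  qed
  then show ?thesis using bounds by blast
qed

end
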